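(* Let $n\ge1$, $\mathcal{D}=\{u\in(0,1)^n:\sum_{i=1}^nu_i<1\}$, $u_0=1-\sum_{i=1}^nu_i$. Let $k_{ij}=k_{ji}>0$ for $i\ne j$ and $k_{ii}=0$ ($i,j=0,\ldots,n$). Let $q_{ij}\ge0$, $r_{ij}=r_{ji}\ge0$ be constants with $q_{i0}=q_{0i}=r_{i0}=r_{ii}=0$, such that $(q_{ij}+r_{ij})_{i,j=1}^n$ is positive definite and $q_{ij}\ge r_{ij}$ for $i,j=1,\ldots,n$. Define, for $i,j=1,\ldots,n$, with $q_i(u)=\sum_{j=1}^nq_{ij}u_j$, $r_i(u)=\sum_{j=1}^nr_{ij}u_j$, $$A_{ij}(u)=(q_i(u)-r_i(u))\delta_{ij}+u_i\Big(q_{ij}-q_j(u)+r_{ij}+r_j(u)-\sum_{\ell=1}^nu_\ell(q_{\ell j}+r_{\ell j})\Big),$$ $$K_{ii}(u)=\sum_{\ell=0}^nk_{i\ell}u_\ell+k_{i0}u_i,\qquad K_{ij}(u)=(k_{i0}-k_{ij})u_i\ (i\ne j).$$ Then for every $u\in\mathcal{D}$, $K(u)$ is invertible and $K(u)^{-1}A(u)$ is positively stable, i.e., all its eigenvalues have positive real parts.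
   Context: $K(u)$ encodes the drag forces: $\sum_{j=0}^nk_{ij}u_iu_j(v_i-v_j)=(K(u)J)_i$ with $J_i=u_iv_i$ and $J_0=-\sum_{i\ge1}J_i$; the multiphase system then reads $\partial_tu=\operatorname{div}(K(u)^{-1}A(u)\nabla u)$. Positive definiteness of a matrix refers to its symmetric part. *)

theory Defs
  imports "Jordan_Normal_Form.Jordan_Normal_Form"
begin

definition u0 :: "nat \<Rightarrow> (nat \<Rightarrow> real) \<Rightarrow> real" where
  "u0 n u = 1 - (\<Sum>i=1..n. u i)"

definition ufull :: "nat \<Rightarrow> (nat \<Rightarrow> real) \<Rightarrow> nat \<Rightarrow> real" where
  "ufull n u l = (if l = 0 then u0 n u else u l)"

definition in_D :: "nat \<Rightarrow> (nat \<Rightarrow> real) \<Rightarrow> bool" where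
  "in_D n u \<longleftrightarrow> (\<forall>i\<in>{1..n}. 0 < u i \<and> u i < 1) \<and> (\<Sum>i=1..n. u i) < 1"

definition qv :: "nat \<Rightarrow> (nat \<Rightarrow> nat \<Rightarrow> real) \<Rightarrow> (nat \<Rightarrow> real) \<Rightarrow> nat \<Rightarrow> real" where
  "qv n q u i = (\<Sum>j=1..n. q i j * u j)"

text \<open>Matrix A(u); entry (i,j) (0-based, i,j < n) corresponds to indices i+1, j+1.\<close>
definition A_entry :: "nat \<Rightarrow> (nat \<Rightarrow> nat \<Rightarrow> real) \<Rightarrow> (nat \<Rightarrow> nat \<Rightarrow> real)
    \<Rightarrow> (nat \<Rightarrow> real) \<Rightarrow> nat \<Rightarrow> nat \<Rightarrow> real" where
  "A_entry n q r u i j =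
     (if i = j then qv n q u i - qv n r u i else 0)
     + u i * (q i j - qv n q u j + r i j + qv n r u j
              - (\<Sum>l=1..n. u l * (q l j + r l j)))"

definition A_mat :: "nat \<Rightarrow> (nat \<Rightarrow> nat \<Rightarrow> real) \<Rightarrow> (nat \<Rightarrow> nat \<Rightarrow> real)
    \<Rightarrow> (nat \<Rightarrow> real) \<Rightarrow> real mat" where
  "A_mat n q r u = mat n n (\<lambda>(i, j). A_entry n q r u (Suc i) (Suc j))"

definition K_entry :: "nat \<Rightarrow> (nat \<Rightarrow> nat \<Rightarrow> real) \<Rightarrow> (nat \<Rightarrow> real) \<Rightarrow> nat \<Rightarrow> nat \<Rightarrow> real" where
  "K_entry n k u i j =
     (if i = j then (\<Sum>l=0..n. k i l * ufull n u l) + k i 0 * u i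
      else (k i 0 - k i j) * u i)"

definition K_mat :: "nat \<Rightarrow> (nat \<Rightarrow> nat \<Rightarrow> real) \<Rightarrow> (nat \<Rightarrow> real) \<Rightarrow> real mat" where
  "K_mat n k u = mat n n (\<lambda>(i, j). K_entry n k u (Suc i) (Suc j))"

text \<open>Positive definiteness of a (not necessarily symmetric) matrix = positive definiteness
  of its symmetric part.\<close>
definition pos_def_sym :: "real mat \<Rightarrow> bool" where
  "pos_def_sym M \<longleftrightarrow> (\<forall>x \<in> carrier_vec (dim_row M). x \<noteq> 0\<^sub>v (dim_row M) \<longrightarrow>
      x \<bullet> (((1/2) \<cdot>\<^sub>m (M + transpose_mat M)) *\<^sub>v x) > 0)"

definition positively_stable :: "real mat \<Rightarrow> bool" where
  "positively_stable M \<longleftrightarrow>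
     (\<forall>ev. eigenvalue (map_mat complex_of_real M) ev \<longrightarrow> Re ev > 0)"

end

theory Submission
  imports Defs
begin

(* Let H(u) = diag(1/u_i) + (1/u_0) 1 1^T be the Hessian of the entropy sum_{i=0}^n u_i ln u_i as a
   function of u_1, ..., u_n. For fluxes J_1, ..., J_n put J_0 = -(J_1 + ... + J_n) and v_i = J_i / u_i.
   Then (H J)_i = v_i - v_0 and (K J)_i = sum_{j=0}^n k_ij u_i u_j (v_i - v_j), hence
     <H J, K J'> = 1/2 sum_{i,j=0}^n k_ij u_i u_j (v_i - v_j) (v'_i - v'_j),
   a symmetric form which is positive definite because k_i0 > 0 and sum_{i=0}^n u_i v_i = 0.
   Similarly <H y, A y> = sum_i (q_i(u) - r_i(u)) y_i^2 / u_i + y^T (q_ij + r_ij) y > 0.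
   If K^-1 A x = lambda x with x = a + i b, the real and imaginary parts of A x = lambda K x paired
   with H a and H b give <H a, A a> + <H b, A b> = Re lambda (<H a, K a> + <H b, K b>),
   so Re lambda > 0. *)

section \<open>Positive stability via a symmetrizer\<close>

lemma mult_mat_vec_shifted:
  assumes "i \<in> {1..n}" and "v \<in> carrier_vec n"
  shows "(mat n n (\<lambda>(i, j). f (Suc i) (Suc j)) *\<^sub>v v) $ (i - 1) = (\<Sum>j=1..n. f i j * v $ (j - 1))"
proof -
  have "(mat n n (\<lambda>(i, j). f (Suc i) (Suc j)) *\<^sub>v v) $ (i - 1) = (\<Sum>j<n. f i (Suc j) * v $ j)"
    using assms by (auto simp: scalar_prod_def lessThan_atLeast0)
  also have "\<dots> = (\<Sum>j=1..n. f i j * v $ (j - 1))"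
    by (simp add: sum.atLeast1_atMost_eq)
  finally show ?thesis .
qed

lemma scalar_prod_shifted:
  assumes "dim_vec b = n"
  shows "a \<bullet> b = (\<Sum>i=1..n. a $ (i - 1) * b $ (i - 1))"
  using assms by (simp add: scalar_prod_def sum.atLeast1_atMost_eq atLeast0LessThan)

lemma quadratic_form_pos_if_pos_def_sym:
  fixes M :: "real mat"
  assumes M: "M \<in> carrier_mat n n" and "pos_def_sym M"
    and x: "x \<in> carrier_vec n" "x \<noteq> 0\<^sub>v n"
  shows "0 < x \<bullet> (M *\<^sub>v x)"
proof -
  have "x \<bullet> (transpose_mat M *\<^sub>v x) = (transpose_mat M *\<^sub>v x) \<bullet> x"
    using M x by (intro comm_scalar_prod[of _ n]) auto
  also have "\<dots> = x \<bullet> (M *\<^sub>v x)"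
    using transpose_vec_mult_scalar[OF M x(1) x(1)] .
  finally have "x \<bullet> (transpose_mat M *\<^sub>v x) = x \<bullet> (M *\<^sub>v x)" .
  moreover have "((1/2) \<cdot>\<^sub>m N) *\<^sub>v x = (1/2) \<cdot>\<^sub>v (N *\<^sub>v x)"
    if "N \<in> carrier_mat n n" for N :: "real mat"
    using that x by (intro eq_vecI) (auto simp: scalar_prod_def sum_distrib_left)
  ultimately have "x \<bullet> (((1/2) \<cdot>\<^sub>m (M + transpose_mat M)) *\<^sub>v x) = x \<bullet> (M *\<^sub>v x)"
    using M x by (simp add: add_mult_distrib_mat_vec[of _ n n] scalar_prod_add_distrib[of _ n])
  with assms show ?thesis
    unfolding pos_def_sym_def by auto
qed

lemma invertible_mat_if_pos_form:
  fixes H K :: "real mat"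
  assumes K: "K \<in> carrier_mat n n"
    and pos: "\<And>a. a \<in> carrier_vec n \<Longrightarrow> a \<noteq> 0\<^sub>v n \<Longrightarrow> 0 < (H *\<^sub>v a) \<bullet> (K *\<^sub>v a)"
  shows "invertible_mat K"
proof -
  have "a = 0\<^sub>v n" if "a \<in> carrier_vec n" "K *\<^sub>v a = 0\<^sub>v n" for a
    using pos[OF that(1)] that(2) by (force simp: scalar_prod_def)
  then have "det K \<noteq> 0"
    using det_0_iff_vec_prod_zero_field[OF K] by blast
  then have "K \<in> Units (ring_mat TYPE(real) n ())"
    by (rule det_non_zero_imp_unit[OF K])
  then obtain B where "B \<in> carrier_mat n n" "B * K = 1\<^sub>m n" "K * B = 1\<^sub>m n"
    unfolding Units_def ring_mat_def by auto
  with K show ?thesis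
    unfolding invertible_mat_def inverts_mat_def by auto
qed

lemma of_real_eigenvector_Re_Im:
  fixes M :: "real mat"
  assumes M: "M \<in> carrier_mat n n" and x: "x \<in> carrier_vec n"
    and eig: "map_mat complex_of_real M *\<^sub>v x = ev \<cdot>\<^sub>v x"
  shows "M *\<^sub>v map_vec Re x = Re ev \<cdot>\<^sub>v map_vec Re x - Im ev \<cdot>\<^sub>v map_vec Im x"
    and "M *\<^sub>v map_vec Im x = Im ev \<cdot>\<^sub>v map_vec Re x + Re ev \<cdot>\<^sub>v map_vec Im x"
proof -
  have Re_Im: "(M *\<^sub>v map_vec Re x) $ i = Re ((ev \<cdot>\<^sub>v x) $ i)"
    "(M *\<^sub>v map_vec Im x) $ i = Im ((ev \<cdot>\<^sub>v x) $ i)" if "i < n" for i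
    unfolding eig[symmetric] using that M x by (simp_all add: scalar_prod_def)
  show "M *\<^sub>v map_vec Re x = Re ev \<cdot>\<^sub>v map_vec Re x - Im ev \<cdot>\<^sub>v map_vec Im x"
    using M x Re_Im by (intro eq_vecI) auto
  show "M *\<^sub>v map_vec Im x = Im ev \<cdot>\<^sub>v map_vec Re x + Re ev \<cdot>\<^sub>v map_vec Im x"
    using M x Re_Im by (intro eq_vecI) auto
qed

lemma positively_stable_if_symmetrizable:
  fixes H K A M :: "real mat"
  assumes H: "H \<in> carrier_mat n n" and K: "K \<in> carrier_mat n n" and M: "M \<in> carrier_mat n n"
    and KM: "K * M = A"
    and sym: "\<And>a b. a \<in> carrier_vec n \<Longrightarrow> b \<in> carrier_vec n \<Longrightarrow>
                (H *\<^sub>v a) \<bullet> (K *\<^sub>v b) = (H *\<^sub>v b) \<bullet> (K *\<^sub>v a)"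
    and K_pos: "\<And>a. a \<in> carrier_vec n \<Longrightarrow> a \<noteq> 0\<^sub>v n \<Longrightarrow> 0 < (H *\<^sub>v a) \<bullet> (K *\<^sub>v a)"
    and A_pos: "\<And>a. a \<in> carrier_vec n \<Longrightarrow> a \<noteq> 0\<^sub>v n \<Longrightarrow> 0 < (H *\<^sub>v a) \<bullet> (A *\<^sub>v a)"
  shows "positively_stable M"
  unfolding positively_stable_def
proof (intro allI impI)
  fix ev assume "eigenvalue (map_mat complex_of_real M) ev"
  then obtain x where x: "x \<in> carrier_vec n" "x \<noteq> 0\<^sub>v n"
    and eig: "map_mat complex_of_real M *\<^sub>v x = ev \<cdot>\<^sub>v x"
    using M unfolding eigenvalue_def eigenvector_def by auto
  define a b where "a = map_vec Re x" and "b = map_vec Im x"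
  have ab: "a \<in> carrier_vec n" "b \<in> carrier_vec n"
    using x by (auto simp: a_def b_def)
  have Aa: "A *\<^sub>v a = Re ev \<cdot>\<^sub>v (K *\<^sub>v a) - Im ev \<cdot>\<^sub>v (K *\<^sub>v b)"
    and Ab: "A *\<^sub>v b = Im ev \<cdot>\<^sub>v (K *\<^sub>v a) + Re ev \<cdot>\<^sub>v (K *\<^sub>v b)"
    using of_real_eigenvector_Re_Im[OF M x(1) eig] K M ab unfolding a_def[symmetric] b_def[symmetric]
    by (simp_all add: KM[symmetric] mult_minus_distrib_mat_vec mult_add_distrib_mat_vec mult_mat_vec)
  have "(H *\<^sub>v a) \<bullet> (A *\<^sub>v a) + (H *\<^sub>v b) \<bullet> (A *\<^sub>v b)
      = Re ev * ((H *\<^sub>v a) \<bullet> (K *\<^sub>v a) + (H *\<^sub>v b) \<bullet> (K *\<^sub>v b))"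
    using sym[OF ab] H K ab unfolding Aa Ab
    by (simp add: scalar_prod_minus_distrib[of _ n] scalar_prod_add_distrib[of _ n] algebra_simps)
  moreover have "a \<noteq> 0\<^sub>v n \<or> b \<noteq> 0\<^sub>v n"
  proof (rule ccontr)
    assume "\<not> (a \<noteq> 0\<^sub>v n \<or> b \<noteq> 0\<^sub>v n)"
    then have "Re (x $ i) = 0 \<and> Im (x $ i) = 0" if "i < n" for i
      using x(1) that unfolding a_def b_def by (metis index_map_vec index_zero_vec)
    then have "x = 0\<^sub>v n"
      using x(1) by (intro eq_vecI) (auto simp: complex_eq_iff)
    with x(2) show False ..
  qed
  moreover have "0 \<le> (H *\<^sub>v v) \<bullet> (A *\<^sub>v v)" "0 \<le> (H *\<^sub>v v) \<bullet> (K *\<^sub>v v)"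
    if "v \<in> carrier_vec n" for v
    using A_pos[OF that] K_pos[OF that] by (cases "v = 0\<^sub>v n"; force simp: scalar_prod_def)+
  ultimately show "0 < Re ev"
    using A_pos[OF ab(1)] A_pos[OF ab(2)] K_pos[OF ab(1)] K_pos[OF ab(2)] ab
    by (smt (verit) zero_less_mult_iff)
qed

section \<open>The entropy Hessian as symmetrizer\<close>

lemma sum_pairing_symmetric_weights:
  fixes c :: "'a \<Rightarrow> 'a \<Rightarrow> real"
  assumes sym: "\<And>i j. i \<in> I \<Longrightarrow> j \<in> I \<Longrightarrow> c i j = c j i"
  shows "(\<Sum>i\<in>I. v i * (\<Sum>j\<in>I. c i j * (w i - w j)))
       = (\<Sum>i\<in>I. \<Sum>j\<in>I. c i j * (v i - v j) * (w i - w j)) / 2"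
proof -
  let ?L = "\<Sum>i\<in>I. \<Sum>j\<in>I. c i j * v i * (w i - w j)"
  have L: "(\<Sum>i\<in>I. v i * (\<Sum>j\<in>I. c i j * (w i - w j))) = ?L"
    by (simp add: sum_distrib_left mult_ac)
  have "?L = (\<Sum>j\<in>I. \<Sum>i\<in>I. c i j * v i * (w i - w j))"
    by (rule sum.swap)
  also have "\<dots> = (\<Sum>i\<in>I. \<Sum>j\<in>I. - (c i j * v j * (w i - w j)))"
    using sym by (intro sum.cong refl) (simp add: algebra_simps)
  finally have "2 * ?L = ?L - (\<Sum>i\<in>I. \<Sum>j\<in>I. c i j * v j * (w i - w j))"
    by (simp add: sum_negf)
  also have "\<dots> = (\<Sum>i\<in>I. \<Sum>j\<in>I. c i j * (v i - v j) * (w i - w j))"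
    by (simp add: sum_subtractf[symmetric] algebra_simps)
  finally show ?thesis
    unfolding L by simp
qed

definition velocity :: "nat \<Rightarrow> (nat \<Rightarrow> real) \<Rightarrow> (nat \<Rightarrow> real) \<Rightarrow> nat \<Rightarrow> real" where
  "velocity n u J l = (if l = 0 then - (\<Sum>i=1..n. J i) else J l) / ufull n u l"

definition entropy_hessian :: "nat \<Rightarrow> (nat \<Rightarrow> real) \<Rightarrow> real mat" where
  "entropy_hessian n u = mat n n (\<lambda>(i, j). (if i = j then 1 / u (Suc i) else 0) + 1 / u0 n u)"

lemma ufull_pos:
  assumes "in_D n u" and "l \<in> {0..n}"
  shows "0 < ufull n u l"
  using assms by (auto simp: in_D_def ufull_def u0_def)

lemma sum_ufull: "(\<Sum>l=0..n. ufull n u l) = 1"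
proof -
  have "(\<Sum>l=1..n. ufull n u l) = (\<Sum>l=1..n. u l)"
    by (intro sum.cong) (auto simp: ufull_def)
  then show ?thesis
    by (simp add: sum.atLeast_Suc_atMost[of 0 n] ufull_def u0_def)
qed

lemma ufull_mult_velocity:
  assumes "in_D n u" and "l \<in> {0..n}"
  shows "ufull n u l * velocity n u J l = (if l = 0 then - (\<Sum>i=1..n. J i) else J l)"
  using ufull_pos[OF assms] by (simp add: velocity_def)

lemma sum_ufull_mult_velocity:
  assumes "in_D n u"
  shows "(\<Sum>l=0..n. ufull n u l * velocity n u J l) = 0"
proof -
  have "(\<Sum>l=1..n. ufull n u l * velocity n u J l) = (\<Sum>l=1..n. J l)"
    by (intro sum.cong) (auto simp: ufull_mult_velocity[OF assms])
  then show ?thesis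
    by (simp add: sum.atLeast_Suc_atMost[of 0 n] ufull_mult_velocity[OF assms])
qed

lemma flux_zero_if_velocities_equal:
  assumes u: "in_D n u" and eq: "\<And>i. i \<in> {1..n} \<Longrightarrow> velocity n u J i = velocity n u J 0"
    and i: "i \<in> {1..n}"
  shows "J i = 0"
proof -
  have eq0: "velocity n u J l = velocity n u J 0" if "l \<in> {0..n}" for l
    using eq[of l] that by (cases "l = 0") auto
  have "velocity n u J 0 = (\<Sum>l=0..n. ufull n u l) * velocity n u J 0"
    by (simp add: sum_ufull)
  also have "\<dots> = (\<Sum>l=0..n. ufull n u l * velocity n u J l)"
    unfolding sum_distrib_right by (intro sum.cong refl) (metis eq0)
  also have "\<dots> = 0"
    by (rule sum_ufull_mult_velocity[OF u])
  finally have "velocity n u J i = 0"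
    using eq[OF i] by simp
  then show ?thesis
    using ufull_mult_velocity[OF u, of i J] i by simp
qed

lemma entropy_hessian_mult_vec:
  assumes "a \<in> carrier_vec n" and "i \<in> {1..n}"
  shows "(entropy_hessian n u *\<^sub>v a) $ (i - 1) = a $ (i - 1) / u i + (\<Sum>l=1..n. a $ (l - 1)) / u0 n u"
proof -
  have "(entropy_hessian n u *\<^sub>v a) $ (i - 1)
      = (\<Sum>j=1..n. ((if i = j then 1 / u i else 0) + 1 / u0 n u) * a $ (j - 1))"
    unfolding entropy_hessian_def
    using mult_mat_vec_shifted[OF assms(2,1), of "\<lambda>i j. (if i = j then 1 / u i else 0) + 1 / u0 n u"]
    by simp
  also have "\<dots> = (\<Sum>j=1..n. (if i = j then a $ (j - 1) / u i else 0) + a $ (j - 1) / u0 n u)"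
    by (intro sum.cong) (auto simp: distrib_right)
  finally show ?thesis
    using assms(2) by (simp add: sum.distrib sum_divide_distrib)
qed

lemma K_mat_mult_vec:
  assumes u: "in_D n u" and a: "a \<in> carrier_vec n" and i: "i \<in> {1..n}" and kii: "k i i = 0"
  defines "v \<equiv> velocity n u (\<lambda>l. a $ (l - 1))"
  shows "(K_mat n k u *\<^sub>v a) $ (i - 1)
       = (\<Sum>j=0..n. k i j * ufull n u i * ufull n u j * (v i - v j))"
proof -
  define S where "S = (\<Sum>l=1..n. a $ (l - 1))"
  define T where "T = (\<Sum>l=0..n. k i l * ufull n u l)"
  have Ui: "ufull n u i = u i" "ufull n u i * v i = a $ (i - 1)"
    using i ufull_mult_velocity[OF u, of i] by (auto simp: ufull_def v_def)
  have "(K_mat n k u *\<^sub>v a) $ (i - 1) = (\<Sum>j=1..n. K_entry n k u i j * a $ (j - 1))"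
    unfolding K_mat_def by (rule mult_mat_vec_shifted[OF i a])
  also have "\<dots> = (\<Sum>j=1..n. (if i = j then T * a $ (j - 1) else 0) + u i * k i 0 * a $ (j - 1)
                                - u i * (k i j * a $ (j - 1)))"
    using kii by (intro sum.cong) (auto simp: K_entry_def T_def algebra_simps)
  also have "\<dots> = T * a $ (i - 1) + u i * (k i 0 * S - (\<Sum>j=1..n. k i j * a $ (j - 1)))"
    using i by (simp add: sum.distrib sum_subtractf sum_distrib_left S_def algebra_simps)
  also have "\<dots> = T * (ufull n u i * v i) - ufull n u i * (\<Sum>j=0..n. k i j * (ufull n u j * v j))"
  proof -
    have "(\<Sum>j=1..n. k i j * (ufull n u j * v j)) = (\<Sum>j=1..n. k i j * a $ (j - 1))"
      by (intro sum.cong refl) (simp add: v_def ufull_mult_velocity[OF u])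
    then show ?thesis
      using Ui by (simp add: sum.atLeast_Suc_atMost[of 0 n] v_def ufull_mult_velocity[OF u] S_def
          algebra_simps)
  qed
  also have "\<dots> = (\<Sum>j=0..n. k i j * ufull n u i * ufull n u j * (v i - v j))"
    by (simp add: T_def sum_distrib_left sum_distrib_right sum_subtractf[symmetric] algebra_simps)
  finally show ?thesis .
qed

lemma K_mat_hessian_form:
  assumes u: "in_D n u" and a: "a \<in> carrier_vec n" and b: "b \<in> carrier_vec n"
    and k_sym: "\<And>i j. i \<in> {0..n} \<Longrightarrow> j \<in> {0..n} \<Longrightarrow> k i j = k j i"
    and k_diag: "\<And>i. i \<in> {1..n} \<Longrightarrow> k i i = 0"
  defines "v \<equiv> velocity n u (\<lambda>l. a $ (l - 1))" and "w \<equiv> velocity n u (\<lambda>l. b $ (l - 1))"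
  shows "(entropy_hessian n u *\<^sub>v a) \<bullet> (K_mat n k u *\<^sub>v b)
       = (\<Sum>i=0..n. \<Sum>j=0..n. k i j * ufull n u i * ufull n u j * (v i - v j) * (w i - w j)) / 2"
proof -
  define c where "c i j = k i j * ufull n u i * ufull n u j" for i j
  have c_sym: "c i j = c j i" if "i \<in> {0..n}" "j \<in> {0..n}" for i j
    using k_sym[OF that] by (simp add: c_def)
  have "(entropy_hessian n u *\<^sub>v a) \<bullet> (K_mat n k u *\<^sub>v b)
      = (\<Sum>i=1..n. (entropy_hessian n u *\<^sub>v a) $ (i - 1) * (K_mat n k u *\<^sub>v b) $ (i - 1))"
    by (rule scalar_prod_shifted) (simp add: K_mat_def)
  also have "\<dots> = (\<Sum>i=1..n. (v i - v 0) * (\<Sum>j=0..n. c i j * (w i - w j)))"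
  proof (intro sum.cong refl)
    fix i assume i: "i \<in> {1..n}"
    have "(entropy_hessian n u *\<^sub>v a) $ (i - 1) = v i - v 0"
      unfolding entropy_hessian_mult_vec[OF a i] using i by (simp add: v_def velocity_def ufull_def)
    moreover have "(K_mat n k u *\<^sub>v b) $ (i - 1) = (\<Sum>j=0..n. c i j * (w i - w j))"
      unfolding c_def w_def by (rule K_mat_mult_vec[where k=k, OF u b i k_diag[OF i]])
    ultimately show "(entropy_hessian n u *\<^sub>v a) $ (i - 1) * (K_mat n k u *\<^sub>v b) $ (i - 1)
        = (v i - v 0) * (\<Sum>j=0..n. c i j * (w i - w j))"
      by simp
  qed
  also have "\<dots> = (\<Sum>i=0..n. (v i - v 0) * (\<Sum>j=0..n. c i j * (w i - w j)))"
    using sum.atLeast_Suc_atMost[of 0 n "\<lambda>i. (v i - v 0) * (\<Sum>j=0..n. c i j * (w i - w j))"]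
    by simp
  also have "\<dots> = (\<Sum>i=0..n. \<Sum>j=0..n. c i j * ((v i - v 0) - (v j - v 0)) * (w i - w j)) / 2"
    by (rule sum_pairing_symmetric_weights[OF c_sym])
  finally show ?thesis
    by (simp add: c_def)
qed

lemma K_mat_hessian_form_sym:
  assumes u: "in_D n u" and a: "a \<in> carrier_vec n" and b: "b \<in> carrier_vec n"
    and k_sym: "\<And>i j. i \<in> {0..n} \<Longrightarrow> j \<in> {0..n} \<Longrightarrow> k i j = k j i"
    and k_diag: "\<And>i. i \<in> {1..n} \<Longrightarrow> k i i = 0"
  shows "(entropy_hessian n u *\<^sub>v a) \<bullet> (K_mat n k u *\<^sub>v b)
       = (entropy_hessian n u *\<^sub>v b) \<bullet> (K_mat n k u *\<^sub>v a)"
  using K_mat_hessian_form[where k=k, OF u a b k_sym k_diag]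
    K_mat_hessian_form[where k=k, OF u b a k_sym k_diag]
  by (simp add: ac_simps)

lemma K_mat_hessian_form_pos:
  assumes u: "in_D n u" and a: "a \<in> carrier_vec n" "a \<noteq> 0\<^sub>v n"
    and k_sym: "\<And>i j. i \<in> {0..n} \<Longrightarrow> j \<in> {0..n} \<Longrightarrow> k i j = k j i"
    and k_pos: "\<And>i j. i \<in> {0..n} \<Longrightarrow> j \<in> {0..n} \<Longrightarrow> i \<noteq> j \<Longrightarrow> 0 < k i j"
    and k_diag: "\<And>i. i \<in> {1..n} \<Longrightarrow> k i i = 0"
  shows "0 < (entropy_hessian n u *\<^sub>v a) \<bullet> (K_mat n k u *\<^sub>v a)"
proof -
  define v where "v = velocity n u (\<lambda>l. a $ (l - 1))"
  define d where "d i j = k i j * ufull n u i * ufull n u j * (v i - v j) * (v i - v j)" for i j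
  have d_nonneg: "0 \<le> d i j" if "i \<in> {0..n}" "j \<in> {0..n}" for i j
    using k_pos[OF that] ufull_pos[OF u that(1)] ufull_pos[OF u that(2)]
    by (cases "i = j") (simp_all add: d_def mult.assoc mult_nonneg_nonneg)
  obtain i where i: "i \<in> {1..n}" and "v i \<noteq> v 0"
  proof -
    obtain i0 where i0: "i0 < n" "a $ i0 \<noteq> 0"
      using a by (metis carrier_vecD eq_vecI index_zero_vec)
    have "a $ i0 = 0" if "\<forall>i\<in>{1..n}. v i = v 0"
      using flux_zero_if_velocities_equal[OF u, of "\<lambda>l. a $ (l - 1)" "Suc i0"] that i0(1)
      by (simp add: v_def)
    then show ?thesis
      using that i0(2) by blast
  qed
  then have "0 < d i 0"
    using k_pos[of i 0] ufull_pos[OF u, of i] ufull_pos[OF u, of 0] i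
    by (auto simp: d_def mult.assoc zero_less_mult_iff)
  then have "0 < (\<Sum>j=0..n. d i j)"
    using d_nonneg i by (intro sum_pos2[where i=0]) auto
  then have "0 < (\<Sum>i=0..n. \<Sum>j=0..n. d i j)"
    using d_nonneg i by (intro sum_pos2[where i=i and f="\<lambda>i. \<Sum>j=0..n. d i j"] sum_nonneg) auto
  moreover have "(entropy_hessian n u *\<^sub>v a) \<bullet> (K_mat n k u *\<^sub>v a) = (\<Sum>i=0..n. \<Sum>j=0..n. d i j) / 2"
    unfolding d_def v_def by (rule K_mat_hessian_form[where k=k, OF u a(1) a(1) k_sym k_diag])
  ultimately show ?thesis
    by simp
qed

lemma A_mat_mult_vec:
  fixes q r :: "nat \<Rightarrow> nat \<Rightarrow> real" and u :: "nat \<Rightarrow> real"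
  assumes b: "b \<in> carrier_vec n" and i: "i \<in> {1..n}"
  defines "p \<equiv> \<Sum>j=1..n. (qv n q u j - qv n r u j + (\<Sum>l=1..n. u l * (q l j + r l j))) * b $ (j - 1)"
  shows "(A_mat n q r u *\<^sub>v b) $ (i - 1)
       = (qv n q u i - qv n r u i) * b $ (i - 1) + u i * ((\<Sum>j=1..n. (q i j + r i j) * b $ (j - 1)) - p)"
proof -
  have "(A_mat n q r u *\<^sub>v b) $ (i - 1) = (\<Sum>j=1..n. A_entry n q r u i j * b $ (j - 1))"
    unfolding A_mat_def by (rule mult_mat_vec_shifted[OF i b])
  also have "\<dots> = (\<Sum>j=1..n. (if i = j then (qv n q u i - qv n r u i) * b $ (j - 1) else 0)
      + u i * ((q i j + r i j) * b $ (j - 1)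
               - (qv n q u j - qv n r u j + (\<Sum>l=1..n. u l * (q l j + r l j))) * b $ (j - 1)))"
    by (intro sum.cong) (auto simp: A_entry_def algebra_simps)
  finally show ?thesis
    using i by (simp add: sum.distrib sum_distrib_left[symmetric] sum_subtractf p_def)
qed

lemma sum_A_mat_mult_vec:
  fixes q r :: "nat \<Rightarrow> nat \<Rightarrow> real" and u :: "nat \<Rightarrow> real"
  assumes b: "b \<in> carrier_vec n"
  defines "p \<equiv> \<Sum>j=1..n. (qv n q u j - qv n r u j + (\<Sum>l=1..n. u l * (q l j + r l j))) * b $ (j - 1)"
  shows "(\<Sum>i=1..n. (A_mat n q r u *\<^sub>v b) $ (i - 1)) = u0 n u * p"
proof -
  define M where "M i = (\<Sum>j=1..n. (q i j + r i j) * b $ (j - 1))" for i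
  have "(\<Sum>i=1..n. u i * M i) = (\<Sum>j=1..n. (\<Sum>l=1..n. u l * (q l j + r l j)) * b $ (j - 1))"
    unfolding M_def sum_distrib_left sum_distrib_right by (subst sum.swap) (simp add: mult_ac)
  then have "(\<Sum>i=1..n. (qv n q u i - qv n r u i) * b $ (i - 1) + u i * (M i - p)) = u0 n u * p"
    by (simp add: sum.distrib sum_subtractf p_def u0_def algebra_simps sum_distrib_right[symmetric])
  moreover have "(A_mat n q r u *\<^sub>v b) $ (i - 1) = (qv n q u i - qv n r u i) * b $ (i - 1) + u i * (M i - p)"
    if "i \<in> {1..n}" for i
    unfolding M_def p_def by (rule A_mat_mult_vec[OF b that])
  ultimately show ?thesis
    by simp
qed

lemma A_mat_hessian_form:
  assumes u: "in_D n u" and a: "a \<in> carrier_vec n" and b: "b \<in> carrier_vec n"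
  shows "(entropy_hessian n u *\<^sub>v a) \<bullet> (A_mat n q r u *\<^sub>v b)
       = (\<Sum>i=1..n. (qv n q u i - qv n r u i) / u i * a $ (i - 1) * b $ (i - 1))
         + a \<bullet> (mat n n (\<lambda>(i, j). q (Suc i) (Suc j) + r (Suc i) (Suc j)) *\<^sub>v b)"
proof -
  define y z where "y l = a $ (l - 1)" and "z l = b $ (l - 1)" for l
  define e where "e j = qv n q u j - qv n r u j" for j
  define M where "M i = (\<Sum>j=1..n. (q i j + r i j) * z j)" for i
  define p where "p = (\<Sum>j=1..n. (e j + (\<Sum>l=1..n. u l * (q l j + r l j))) * z j)"
  define Ab where "Ab = A_mat n q r u *\<^sub>v b"
  define S where "S = (\<Sum>l=1..n. y l)"
  have Ab_row: "Ab $ (i - 1) = e i * z i + u i * (M i - p)" if "i \<in> {1..n}" for i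
    unfolding Ab_def e_def z_def M_def p_def by (rule A_mat_mult_vec[OF b that])
  have Ab_sum: "(\<Sum>i=1..n. Ab $ (i - 1)) = u0 n u * p"
    unfolding Ab_def e_def z_def p_def by (rule sum_A_mat_mult_vec[OF b])
  have dims: "dim_vec Ab = n"
    "dim_vec (mat n n (\<lambda>(i, j). q (Suc i) (Suc j) + r (Suc i) (Suc j)) *\<^sub>v b) = n"
    by (simp_all add: Ab_def A_mat_def)
  have "(entropy_hessian n u *\<^sub>v a) \<bullet> Ab = (\<Sum>i=1..n. (y i / u i + S / u0 n u) * Ab $ (i - 1))"
    unfolding scalar_prod_shifted[OF dims(1)]
    by (intro sum.cong refl) (simp only: entropy_hessian_mult_vec[OF a] y_def S_def)
  also have "\<dots> = (\<Sum>i=1..n. y i / u i * Ab $ (i - 1)) + S / u0 n u * (\<Sum>i=1..n. Ab $ (i - 1))"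
    by (simp only: sum_distrib_left[of "S / u0 n u"] sum.distrib[symmetric] distrib_right)
  also have "(\<Sum>i=1..n. y i / u i * Ab $ (i - 1)) = (\<Sum>i=1..n. e i / u i * y i * z i + y i * M i - y i * p)"
  proof (intro sum.cong refl)
    fix i assume i: "i \<in> {1..n}"
    then have "u i \<noteq> 0"
      using u by (force simp: in_D_def)
    then show "y i / u i * Ab $ (i - 1) = e i / u i * y i * z i + y i * M i - y i * p"
      unfolding Ab_row[OF i] by (simp add: field_simps)
  qed
  also have "S / u0 n u * (\<Sum>i=1..n. Ab $ (i - 1)) = S * p"
    unfolding Ab_sum using ufull_pos[OF u, of 0] by (simp add: ufull_def)
  finally have "(entropy_hessian n u *\<^sub>v a) \<bullet> Ab = (\<Sum>i=1..n. e i / u i * y i * z i) + (\<Sum>i=1..n. y i * M i)"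
    by (simp add: sum.distrib sum_subtractf S_def sum_distrib_right)
  moreover have "a \<bullet> (mat n n (\<lambda>(i, j). q (Suc i) (Suc j) + r (Suc i) (Suc j)) *\<^sub>v b)
      = (\<Sum>i=1..n. y i * M i)"
    unfolding scalar_prod_shifted[OF dims(2)]
  proof (intro sum.cong refl)
    fix i assume i: "i \<in> {1..n}"
    show "a $ (i - 1) * (mat n n (\<lambda>(i, j). q (Suc i) (Suc j) + r (Suc i) (Suc j)) *\<^sub>v b) $ (i - 1)
        = y i * M i"
      unfolding mult_mat_vec_shifted[OF i b, of "\<lambda>i j. q i j + r i j"] y_def M_def z_def ..
  qed
  ultimately show ?thesis
    by (simp add: Ab_def e_def y_def z_def)
qed

lemma A_mat_hessian_form_pos:
  assumes u: "in_D n u" and a: "a \<in> carrier_vec n" "a \<noteq> 0\<^sub>v n"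
    and q_ge_r: "\<And>i j. i \<in> {1..n} \<Longrightarrow> j \<in> {1..n} \<Longrightarrow> r i j \<le> q i j"
    and qr_pd: "pos_def_sym (mat n n (\<lambda>(i, j). q (Suc i) (Suc j) + r (Suc i) (Suc j)))"
  shows "0 < (entropy_hessian n u *\<^sub>v a) \<bullet> (A_mat n q r u *\<^sub>v a)"
proof -
  have upos: "0 < u i" if "i \<in> {1..n}" for i
    using u that by (simp add: in_D_def)
  have e_nonneg: "0 \<le> qv n q u i - qv n r u i" if "i \<in> {1..n}" for i
  proof -
    have "qv n q u i - qv n r u i = (\<Sum>j=1..n. (q i j - r i j) * u j)"
      by (simp add: qv_def sum_subtractf left_diff_distrib)
    also have "0 \<le> \<dots>"
      using q_ge_r[OF that] upos by (intro sum_nonneg) (simp add: less_imp_le)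
    finally show ?thesis .
  qed
  have "0 \<le> (qv n q u i - qv n r u i) / u i * a $ (i - 1) * a $ (i - 1)" if "i \<in> {1..n}" for i
    using mult_nonneg_nonneg[OF divide_nonneg_pos[OF e_nonneg[OF that] upos[OF that]]
        zero_le_square[of "a $ (i - 1)"]]
    by (simp only: mult.assoc)
  then have "0 \<le> (\<Sum>i=1..n. (qv n q u i - qv n r u i) / u i * a $ (i - 1) * a $ (i - 1))"
    by (rule sum_nonneg)
  moreover have "0 < a \<bullet> (mat n n (\<lambda>(i, j). q (Suc i) (Suc j) + r (Suc i) (Suc j)) *\<^sub>v a)"
    by (rule quadratic_form_pos_if_pos_def_sym[OF _ qr_pd a]) simp
  ultimately show ?thesis
    unfolding A_mat_hessian_form[OF u a(1) a(1)] by linarith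
qed

theorem proposition11:
  fixes n :: nat and k q r :: "nat \<Rightarrow> nat \<Rightarrow> real" and u :: "nat \<Rightarrow> real"
  assumes n: "n \<ge> 1"
    and k_sym: "\<forall>i\<in>{0..n}. \<forall>j\<in>{0..n}. k i j = k j i"
    and k_pos: "\<forall>i\<in>{0..n}. \<forall>j\<in>{0..n}. i \<noteq> j \<longrightarrow> k i j > 0"
    and k_diag: "\<forall>i\<in>{0..n}. k i i = 0"
    and q_nonneg: "\<forall>i\<in>{0..n}. \<forall>j\<in>{0..n}. q i j \<ge> 0"
    and r_sym: "\<forall>i\<in>{0..n}. \<forall>j\<in>{0..n}. r i j = r j i"
    and r_nonneg: "\<forall>i\<in>{0..n}. \<forall>j\<in>{0..n}. r i j \<ge> 0"
    and q_zero: "\<forall>i\<in>{0..n}. q i 0 = 0 \<and> q 0 i = 0"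
    and r_zero: "\<forall>i\<in>{0..n}. r i 0 = 0 \<and> r i i = 0"
    and qr_pd: "pos_def_sym (mat n n (\<lambda>(i, j). q (Suc i) (Suc j) + r (Suc i) (Suc j)))"
    and q_ge_r: "\<forall>i\<in>{1..n}. \<forall>j\<in>{1..n}. q i j \<ge> r i j"
    and u: "in_D n u"
  shows "invertible_mat (K_mat n k u) \<and>
         (\<forall>Kinv \<in> carrier_mat n n. inverts_mat (K_mat n k u) Kinv \<longrightarrow>
            positively_stable (Kinv * A_mat n q r u))"
proof -
  let ?H = "entropy_hessian n u" and ?K = "K_mat n k u" and ?A = "A_mat n q r u"
  have K: "?K \<in> carrier_mat n n" and H: "?H \<in> carrier_mat n n"
    by (simp_all add: K_mat_def entropy_hessian_def)
  have k_diag': "k i i = 0" if "i \<in> {1..n}" for i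
    using k_diag that by auto
  note K_sym = K_mat_hessian_form_sym[where k=k, OF u _ _ k_sym[rule_format] k_diag']
  note K_pos = K_mat_hessian_form_pos[where k=k, OF u _ _ k_sym[rule_format] k_pos[rule_format] k_diag']
  note A_pos = A_mat_hessian_form_pos[where q=q and r=r, OF u _ _ q_ge_r[rule_format] qr_pd]
  have "positively_stable (Kinv * ?A)"
    if Kinv: "Kinv \<in> carrier_mat n n" and "inverts_mat ?K Kinv" for Kinv
  proof (rule positively_stable_if_symmetrizable[OF H K])
    have "?K * Kinv = 1\<^sub>m n"
      using \<open>inverts_mat ?K Kinv\<close> K by (simp add: inverts_mat_def)
    then show "?K * (Kinv * ?A) = ?A"
      using K Kinv by (simp add: assoc_mult_mat[symmetric, of _ n n _ n _ n] A_mat_def)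
  qed (use Kinv K_sym K_pos A_pos in \<open>auto simp: A_mat_def\<close>)
  then show ?thesis
    using invertible_mat_if_pos_form[OF K K_pos] by blast
qed

end
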